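(* Suppose every agent $a\in\mathcal A$ satisfies assumptions (A1)–(A8) below and (A9), (A10) hold. Fix initial conditions $(x_0^a,\theta_0^a)\in\mathcal X\times\Theta$ and past incentives $\{\pi^a_i\}_{i=0}^T$ for all $a\in\mathcal A$. Then a solution of $\min\{\Phi(x_0^a,\theta_0^a,\{\pi^a_i\}_{i=0}^{T+n}\text{ for }a\in\mathcal A):\{\{\pi^a_t\}_{t=T+1}^{T+n}\text{ for }a\in\mathcal A\}\in\Omega\}$ is given by the algorithm ABMA described below but with its Step 2 replaced by the step: set $(\hat x^a_{0,T},\hat\theta^a_{0,T})=(x_0^a,\theta_0^a)$.
   Context: Single-agent model (each agent $a$ in the finite set $\mathcal A$ follows it with its own quantities indexed by $a$). Let $\mathcal X,\mathcal U,\Pi,\Theta$ be compact finite-dimensional sets with $\mathcal X,\mathcal U,\Theta$ convex. At each discrete time $t$ the agent has system state $x_t\in\mathcal X$, motivational state $\theta_t\in\Theta$; the coordinator applies $\pi_t\in\Pi$. The agent decides $u_t\in\arg\max\{f(x_{t+1},u,\theta_t,\pi_t):x_{t+1}=h(x_t,u),u\in\mathcal U\}$, and $x_{t+1}=h(x_t,u_t)$, $\theta_{t+1}=g(x_t,u_t,\theta_t,\pi_t)$. Observations $\tilde x_{t_i}=Dx_{t_i}+\nu_{t_i}$, $\tilde y_{\tau_i}=Cu_{\tau_i}+\omega_{\tau_i}$; $C,D$ known; $p_\nu,p_\omega$ noise densities; $(a;b)$ is vertical concatenation. Assumptions: (A1) $\mathcal X,\mathcal U,\Pi,\Theta$ bounded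 finite-dimensional; $\mathcal X,\mathcal U,\Theta$ convex polyhedra given by finitely many linear inequalities; $\Pi$ given by finitely many mixed integer linear constraints. (A2) $f$ deterministic, concave in $x$, strictly concave in $u$, concave in $\theta$, $f(x,u,\theta,\pi)=-(x;u)^TQ(x;u)+(\theta;\pi)^TH(x;u)+\sum_{i=1}^K\min_{j\in J_i}\{F_{i,j}(x;u;\theta;\pi)+\zeta_{i,j}\}$, $Q\succeq0$. (A3) $h,g$ deterministic surjective, $h(x,u)=Ax+Bu+k$, $g(x,u,\theta,\pi)=G_i(x;u;\theta;\pi)+\chi_i$ when $B_i(x;u;\theta;\pi)\le\psi_i$ (finitely many $i$, polytopes with disjoint interiors). (A4) Noises i.i.d. with i.i.d. components, zero mean, known finite variance; $\log p_\nu,\log p_\omega$ expressible by integer linear constraints. (A5) Observability: for some $T$ and incentive sequence, $(x_0,\theta_0)$ is exactly computable from noiseless measurements on $0\le t\le T$. (A6) Prior density $p(x_0,\theta_0)>0$ on $\mathcal X\times\Theta$ with $\log p$ expressible by finitely many mixed integer linear constraints. (A7) Sufficient excitation: with $(x_0^*,\theta_0^* )$ the true initial condition and $\mathcal E(\delta)$ the complement in $\mathcal X\times\Theta$ of its open $\delta$-ball, almost surely for all $\delta>0$, $\max_{\mathcal E(\delta)}\lim_{T\to\infty}\big[\sum_i\log\frac{p_\nu(\tilde x_{t_i}-D\bar x_{t_i})}{p_\nu(\tilde x_{t_i}-Dx_{t_i})}+\sum_j\log\frac{p_\omega(\tilde y_{\tau_j}-C\bar u_{\tau_j})}{p_\omega(\tilde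 y_{\tau_j}-Cu_{\tau_j})}\big]=-\infty$. (A8) The agent's bounded loss $\ell^a:\mathcal X^n\times\mathcal U^n\to\mathbb R$ is described by mixed integer linear constraints. Definitions. $\psi^a_T(\bar x_0,\bar\theta_0)$: maximum over trajectories of $\sum_i\log p_\nu(\tilde x_{t_i}-Dx_{t_i})+\sum_j\log p_\omega(\tilde y_{\tau_j}-Cu_{\tau_j})+\log p(x_0,\theta_0)$ subject to decision rule and dynamics (applied incentives), $x_t\in\mathcal X,\theta_t\in\Theta$, $x_0=\bar x_0,\theta_0=\bar\theta_0$. $\varphi^a(\bar x_0,\bar\theta_0,\{\bar\pi_i\}_{i=0}^{T+n})$: minimum of $\ell^a(\{x_t,u_t\}_{t=T+1}^{T+n})$ over trajectories satisfying decision rule and dynamics with $x_0=\bar x_0,\theta_0=\bar\theta_0,\pi_t=\bar\pi_t$. (A9) The joint loss is separable, taken additively: $\Phi(x_0^a,\theta_0^a,\{\pi^a_i\}_{i=0}^{T+n}\text{ for }a\in\mathcal A)=\sum_a\varphi^a(x_0^a,\theta_0^a,\{\pi^a_i\}_{i=0}^{T+n})$ (the multiplicative case reduces to this by logarithms). (A10) There exist a finite set $V$ of vectors, compact sets $S_v\subseteq\Pi^n$ representable by finitely many mixed integer linear constraints, and a vector $\beta$ such that $\Omega=\{\{\pi^a_i\}_{i=T+1}^{T+n}\text{ for }a\in\mathcal A:\exists\,y^a_v\in\{0,1\},\ \sum_vy^a_v=1\ \forall a,\ \sum_a\sum_v v\,y^a_v\le\beta,\ \{\pi^a_i\}_{i=T+1}^{T+n}\in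 S_v\text{ if }y^a_v=1\}$. Algorithm ABMA (at time $T$): for each $a\in\mathcal A$: Step 2: compute $(\hat x^a_{0,T},\hat\theta^a_{0,T})\in\arg\max\psi^a_T$; for each $v\in V$ (Steps 4–5): set $\pi^a_v\in\arg\min\{\varphi^a(\hat x^a_{0,T},\hat\theta^a_{0,T},\{\pi_i\}_{i=0}^{T+n}):\{\pi_i\}_{i=T+1}^{T+n}\in S_v\}$ (with $\pi_0,\dots,\pi_T$ the given past incentives of agent $a$) and $\phi^a_v=\varphi^a(\hat x^a_{0,T},\hat\theta^a_{0,T},\pi^a_v)$. Step 8: compute $y\in\arg\min\{\sum_a\sum_v\phi^a_vy^a_v:\sum_a\sum_v v\,y^a_v\le\beta,\ \sum_vy^a_v=1\ \forall a,\ y^a_v\in\{0,1\}\}$. Output $\pi^a_{ABMA}(T)=\pi^a_v$ for the $v$ with $y^a_v=1$. *)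

theory Defs
  imports "HOL-Analysis.Analysis"
begin

text \<open>Vectors: system state x :: real^'x, decision u :: real^'u,
  motivational state theta :: real^'t, incentive ps :: real^'p.\<close>

record ('x, 'u, 't, 'p) agent_model =
  Xset :: "(real^'x) set"
  Uset :: "(real^'u) set"
  Thset :: "(real^'t) set"
  Piset :: "(real^'p) set"
  fobj :: "real^'x \<Rightarrow> real^'u \<Rightarrow> real^'t \<Rightarrow> real^'p \<Rightarrow> real"
  hdyn :: "real^'x \<Rightarrow> real^'u \<Rightarrow> real^'x"
  gdyn :: "real^'x \<Rightarrow> real^'u \<Rightarrow> real^'t \<Rightarrow> real^'p \<Rightarrow> real^'t"
  loss :: "(nat \<Rightarrow> real^'x) \<Rightarrow> (nat \<Rightarrow> real^'u) \<Rightarrow> real"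
    \<comment> \<open>loss on X^n x U^n; the i-th component (i < n) of the arguments is
        the value at time T+1+i\<close>

definition strictly_concave_on :: "'a::real_vector set \<Rightarrow> ('a \<Rightarrow> real) \<Rightarrow> bool" where
  "strictly_concave_on S f \<longleftrightarrow>
     (\<forall>x\<in>S. \<forall>y\<in>S. x \<noteq> y \<longrightarrow> (\<forall>t::real. 0 < t \<and> t < 1 \<longrightarrow>
        (1 - t) * f x + t * f y < f ((1 - t) *\<^sub>R x + t *\<^sub>R y)))"

definition milp_set :: "(real^'d) set \<Rightarrow> bool" where
  "milp_set S \<longleftrightarrow> (\<exists>(m::nat) (k::nat) (A :: nat \<Rightarrow> real^'d) (B :: nat \<Rightarrow> nat \<Rightarrow> real)
      (b :: nat \<Rightarrow> real) (I :: nat set).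
     S = {p. \<exists>z :: nat \<Rightarrow> real. (\<forall>j\<in>I. z j \<in> \<int>) \<and>
             (\<forall>q<m. A q \<bullet> p + (\<Sum>j<k. B q j * z j) \<le> b q)})"

text \<open>Sets of n-tuples (p_0,...,p_{n-1}) (encoded as sequences that vanish from n on)
  described by finitely many mixed integer linear constraints.\<close>

definition milp_block :: "nat \<Rightarrow> (nat \<Rightarrow> real^'d) set \<Rightarrow> bool" where
  "milp_block n S \<longleftrightarrow> (\<exists>(m::nat) (k::nat) (A :: nat \<Rightarrow> nat \<Rightarrow> real^'d) (B :: nat \<Rightarrow> nat \<Rightarrow> real)
      (b :: nat \<Rightarrow> real) (I :: nat set).
     S = {p. (\<forall>i\<ge>n. p i = 0) \<and> (\<exists>z :: nat \<Rightarrow> real. (\<forall>j\<in>I. z j \<in> \<int>) \<and>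
             (\<forall>q<m. (\<Sum>i<n. A q i \<bullet> p i) + (\<Sum>j<k. B q j * z j) \<le> b q))})"

definition milp_loss :: "nat \<Rightarrow> (real^'x) set \<Rightarrow> (real^'u) set \<Rightarrow>
    ((nat \<Rightarrow> real^'x) \<Rightarrow> (nat \<Rightarrow> real^'u) \<Rightarrow> real) \<Rightarrow> bool" where
  "milp_loss n X U l \<longleftrightarrow> (\<exists>(m::nat) (k::nat) (Ax :: nat \<Rightarrow> nat \<Rightarrow> real^'x)
      (Au :: nat \<Rightarrow> nat \<Rightarrow> real^'u) (c :: nat \<Rightarrow> real) (B :: nat \<Rightarrow> nat \<Rightarrow> real)
      (b :: nat \<Rightarrow> real) (I :: nat set).
     \<forall>xs us. (\<forall>i<n. xs i \<in> X \<and> us i \<in> U) \<longrightarrow>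
       (\<forall>r. l xs us = r \<longleftrightarrow>
          (\<exists>z :: nat \<Rightarrow> real. (\<forall>j\<in>I. z j \<in> \<int>) \<and>
             (\<forall>q<m. (\<Sum>i<n. Ax q i \<bullet> xs i + Au q i \<bullet> us i) + c q * r
                     + (\<Sum>j<k. B q j * z j) \<le> b q))))"

definition A1 :: "('x::finite, 'u::finite, 't::finite, 'p::finite) agent_model \<Rightarrow> bool" where
  "A1 M \<longleftrightarrow>
     polyhedron (Xset M) \<and> bounded (Xset M) \<and> convex (Xset M) \<and>
     polyhedron (Uset M) \<and> bounded (Uset M) \<and> convex (Uset M) \<and>
     polyhedron (Thset M) \<and> bounded (Thset M) \<and> convex (Thset M) \<and>
     compact (Piset M) \<and> bounded (Piset M) \<and> milp_set (Piset M)"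

definition A2 :: "('x::finite, 'u::finite, 't::finite, 'p::finite) agent_model \<Rightarrow> bool" where
  "A2 M \<longleftrightarrow>
     (\<forall>u\<in>Uset M. \<forall>th\<in>Thset M. \<forall>p\<in>Piset M. concave_on (Xset M) (\<lambda>x. fobj M x u th p)) \<and>
     (\<forall>x\<in>Xset M. \<forall>th\<in>Thset M. \<forall>p\<in>Piset M. strictly_concave_on (Uset M) (\<lambda>u. fobj M x u th p)) \<and>
     (\<forall>x\<in>Xset M. \<forall>u\<in>Uset M. \<forall>p\<in>Piset M. concave_on (Thset M) (\<lambda>th. fobj M x u th p)) \<and>
     (\<exists>(Qxx :: real^'x^'x) (Qxu :: real^'u^'x) (Qux :: real^'x^'u) (Quu :: real^'u^'u)
        (Htx :: real^'x^'t) (Htu :: real^'u^'t) (Hpx :: real^'x^'p) (Hpu :: real^'u^'p)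
        (K :: nat) (J :: nat \<Rightarrow> nat set)
        (Fx :: nat \<Rightarrow> nat \<Rightarrow> real^'x) (Fu :: nat \<Rightarrow> nat \<Rightarrow> real^'u)
        (Ft :: nat \<Rightarrow> nat \<Rightarrow> real^'t) (Fp :: nat \<Rightarrow> nat \<Rightarrow> real^'p)
        (\<zeta> :: nat \<Rightarrow> nat \<Rightarrow> real).
       \<comment> \<open>Q = [Qxx Qxu; Qux Quu] positive semidefinite\<close>
       (\<forall>x u. 0 \<le> x \<bullet> (Qxx *v x) + x \<bullet> (Qxu *v u) + u \<bullet> (Qux *v x) + u \<bullet> (Quu *v u)) \<and>
       (\<forall>i<K. finite (J i) \<and> J i \<noteq> {}) \<and>
       (\<forall>x u th p. fobj M x u th p =
          - (x \<bullet> (Qxx *v x) + x \<bullet> (Qxu *v u) + u \<bullet> (Qux *v x) + u \<bullet> (Quu *v u))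
          + (th \<bullet> (Htx *v x) + th \<bullet> (Htu *v u) + p \<bullet> (Hpx *v x) + p \<bullet> (Hpu *v u))
          + (\<Sum>i<K. Min ((\<lambda>j. Fx i j \<bullet> x + Fu i j \<bullet> u + Ft i j \<bullet> th + Fp i j \<bullet> p + \<zeta> i j) ` J i))))"

definition A3 :: "('x::finite, 'u::finite, 't::finite, 'p::finite) agent_model \<Rightarrow> bool" where
  "A3 M \<longleftrightarrow>
     (\<exists>(Ah :: real^'x^'x) (Bh :: real^'u^'x) (kh :: real^'x).
        \<forall>x u. hdyn M x u = Ah *v x + Bh *v u + kh) \<and>
     (\<exists>(N :: nat) (P :: nat \<Rightarrow> ((real^'x) \<times> (real^'u) \<times> (real^'t) \<times> (real^'p)) set)
        (Gx :: nat \<Rightarrow> real^'x^'t) (Gu :: nat \<Rightarrow> real^'u^'t) (Gt :: nat \<Rightarrow> real^'t^'t)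
        (Gp :: nat \<Rightarrow> real^'p^'t) (chi :: nat \<Rightarrow> real^'t).
        (\<forall>i<N. polyhedron (P i) \<and> bounded (P i)) \<and>
        (\<forall>i<N. \<forall>j<N. i \<noteq> j \<longrightarrow> interior (P i) \<inter> interior (P j) = {}) \<and>
        Xset M \<times> Uset M \<times> Thset M \<times> Piset M \<subseteq> (\<Union>i<N. P i) \<and>
        (\<forall>i<N. \<forall>x u th p. (x, u, th, p) \<in> P i \<longrightarrow>
           gdyn M x u th p = Gx i *v x + Gu i *v u + Gt i *v th + Gp i *v p + chi i)) \<and>
     \<comment> \<open>surjectivity of h and g onto the state spaces\<close>
     Xset M \<subseteq> (\<lambda>(x, u). hdyn M x u) ` (Xset M \<times> Uset M) \<and>
     Thset M \<subseteq> (\<lambda>(x, u, th, p). gdyn M x u th p) ` (Xset M \<times> Uset M \<times> Thset M \<times> Piset M)"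

definition A8 :: "nat \<Rightarrow> ('x::finite, 'u::finite, 't::finite, 'p::finite) agent_model \<Rightarrow> bool" where
  "A8 n M \<longleftrightarrow>
     (\<exists>B. \<forall>xs us. (\<forall>i<n. xs i \<in> Xset M \<and> us i \<in> Uset M) \<longrightarrow> \<bar>loss M xs us\<bar> \<le> B) \<and>
     milp_loss n (Xset M) (Uset M) (loss M)"

definition feasible_traj ::
  "('x::finite, 'u::finite, 't::finite, 'p::finite) agent_model \<Rightarrow> real^'x \<Rightarrow> real^'t \<Rightarrow> (nat \<Rightarrow> real^'p) \<Rightarrow> nat \<Rightarrow>
   (nat \<Rightarrow> real^'x) \<Rightarrow> (nat \<Rightarrow> real^'u) \<Rightarrow> (nat \<Rightarrow> real^'t) \<Rightarrow> bool" where
  "feasible_traj M x0 th0 ps N x u th \<longleftrightarrow>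
     x 0 = x0 \<and> th 0 = th0 \<and>
     (\<forall>t\<le>N. x t \<in> Xset M \<and> th t \<in> Thset M) \<and>
     (\<forall>t\<le>N. u t \<in> Uset M \<and>
        (\<forall>v\<in>Uset M. fobj M (hdyn M (x t) v) v (th t) (ps t)
                     \<le> fobj M (hdyn M (x t) (u t)) (u t) (th t) (ps t)) \<and>
        x (Suc t) = hdyn M (x t) (u t) \<and>
        th (Suc t) = gdyn M (x t) (u t) (th t) (ps t))"

definition phi ::
  "('x::finite, 'u::finite, 't::finite, 'p::finite) agent_model \<Rightarrow> nat \<Rightarrow> nat \<Rightarrow> real^'x \<Rightarrow> real^'t \<Rightarrow> (nat \<Rightarrow> real^'p) \<Rightarrow> real" where
  "phi M T n x0 th0 ps =
     Inf {loss M (\<lambda>i. if i < n then x (T + 1 + i) else 0) (\<lambda>i. if i < n then u (T + 1 + i) else 0)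
          | x u th. feasible_traj M x0 th0 ps (T + n) x u th}"

text \<open>Full incentive sequence from past incentives (times 0..T) and a future
  block (index i stands for time T+1+i).\<close>

definition combine :: "nat \<Rightarrow> (nat \<Rightarrow> 'v) \<Rightarrow> (nat \<Rightarrow> 'v) \<Rightarrow> nat \<Rightarrow> 'v" where
  "combine T past fut = (\<lambda>t. if t \<le> T then past t else fut (t - Suc T))"

definition Phi ::
  "('ag \<Rightarrow> ('x::finite, 'u::finite, 't::finite, 'p::finite) agent_model) \<Rightarrow> 'ag set \<Rightarrow> nat \<Rightarrow> nat \<Rightarrow>
   ('ag \<Rightarrow> real^'x) \<Rightarrow> ('ag \<Rightarrow> real^'t) \<Rightarrow> ('ag \<Rightarrow> nat \<Rightarrow> real^'p) \<Rightarrow>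
   ('ag \<Rightarrow> nat \<Rightarrow> real^'p) \<Rightarrow> real" where
  "Phi Ms A T n x0 th0 past fut =
     (\<Sum>a\<in>A. phi (Ms a) T n (x0 a) (th0 a) (combine T (past a) (fut a)))"

definition selection_ok ::
  "'ag set \<Rightarrow> (real^'k) set \<Rightarrow> real^'k \<Rightarrow> ('ag \<Rightarrow> real^'k \<Rightarrow> real) \<Rightarrow> bool" where
  "selection_ok A V \<beta> y \<longleftrightarrow>
     (\<forall>a\<in>A. \<forall>v\<in>V. y a v \<in> {0, 1}) \<and>
     (\<forall>a\<in>A. (\<Sum>v\<in>V. y a v) = 1) \<and>
     (\<Sum>a\<in>A. \<Sum>v\<in>V. y a v *\<^sub>R v) \<le> \<beta>"

definition Omega ::
  "'ag set \<Rightarrow> (real^'k) set \<Rightarrow> (real^'k \<Rightarrow> (nat \<Rightarrow> real^'p) set) \<Rightarrow> real^'k \<Rightarrow>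
   ('ag \<Rightarrow> nat \<Rightarrow> real^'p) set" where
  "Omega A V S \<beta> = {fut. \<exists>y. selection_ok A V \<beta> y \<and>
       (\<forall>a\<in>A. \<forall>v\<in>V. y a v = 1 \<longrightarrow> fut a \<in> S v)}"

text \<open>Outputs of algorithm ABMA with Step 2 replaced by
  \<open>(\<hat>x, \<hat>\<theta>) := (x0, theta0)\<close>: any choice of minimizers in Steps 4-5 and Step 8.\<close>

definition ABMA_known_output ::
  "('ag \<Rightarrow> ('x::finite, 'u::finite, 't::finite, 'p::finite) agent_model) \<Rightarrow> 'ag set \<Rightarrow> (real^'k) set \<Rightarrow>
   (real^'k \<Rightarrow> (nat \<Rightarrow> real^'p) set) \<Rightarrow> real^'k \<Rightarrow> nat \<Rightarrow> nat \<Rightarrow>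
   ('ag \<Rightarrow> real^'x) \<Rightarrow> ('ag \<Rightarrow> real^'t) \<Rightarrow> ('ag \<Rightarrow> nat \<Rightarrow> real^'p) \<Rightarrow>
   ('ag \<Rightarrow> nat \<Rightarrow> real^'p) \<Rightarrow> bool" where
  "ABMA_known_output Ms A V S \<beta> T n x0 th0 past out \<longleftrightarrow>
     (\<exists>piv :: 'ag \<Rightarrow> real^'k \<Rightarrow> nat \<Rightarrow> real^'p. \<exists>y.
        \<comment> \<open>Steps 4-5\<close>
        (\<forall>a\<in>A. \<forall>v\<in>V. piv a v \<in> S v \<and>
           (\<forall>p\<in>S v. phi (Ms a) T n (x0 a) (th0 a) (combine T (past a) (piv a v))
                      \<le> phi (Ms a) T n (x0 a) (th0 a) (combine T (past a) p))) \<and>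
        \<comment> \<open>Step 8\<close>
        selection_ok A V \<beta> y \<and>
        (\<forall>y'. selection_ok A V \<beta> y' \<longrightarrow>
           (\<Sum>a\<in>A. \<Sum>v\<in>V. phi (Ms a) T n (x0 a) (th0 a) (combine T (past a) (piv a v)) * y a v)
           \<le> (\<Sum>a\<in>A. \<Sum>v\<in>V. phi (Ms a) T n (x0 a) (th0 a) (combine T (past a) (piv a v)) * y' a v)) \<and>
        \<comment> \<open>output\<close>
        (\<forall>a\<in>A. \<forall>v\<in>V. y a v = 1 \<longrightarrow> out a = piv a v))"

end

theory Submission
  imports Defs
begin

text \<open>Since \<open>\<Phi>\<close> is a sum of per-agent losses and \<open>\<Omega>\<close> is the union, over the admissible
  0/1 selections \<open>y\<close>, of the products of the blocks \<open>S v\<close> chosen by \<open>y\<close>, the joint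
  minimum is attained by first minimising each agent's loss over each block \<open>S v\<close>
  (Steps 4-5) and then solving the selection problem with these minimal values as
  costs (Step 8): any feasible incentive is dominated blockwise by the minimisers of
  the blocks it lies in, hence by the selection cost of its own selection, hence by
  the optimal selection cost. With the true initial conditions known, no estimation
  step is needed. Assumptions (A1)-(A8) only serve to make the minimisers exist,
  which the algorithm's output already presupposes.\<close>

lemma zero_one_sum_eq_1_obtain:
  fixes y :: "'v \<Rightarrow> real"
  assumes "finite V" "\<forall>v\<in>V. y v \<in> {0, 1}" "(\<Sum>v\<in>V. y v) = 1"
  obtains v0 where "v0 \<in> V" "y v0 = 1" "\<forall>v\<in>V - {v0}. y v = 0"
proof -
  obtain v0 where v0: "v0 \<in> V" "y v0 \<noteq> 0"
    using assms(3) sum.neutral[of V y] by (metis zero_neq_one)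
  then have y_v0: "y v0 = 1" using assms(2) by auto
  have "(\<Sum>v\<in>V - {v0}. y v) = 0"
    using assms(1,3) v0(1) y_v0 by (simp add: sum.remove)
  moreover have "\<forall>v\<in>V - {v0}. 0 \<le> y v" using assms(2) by auto
  ultimately have "\<forall>v\<in>V - {v0}. y v = 0"
    using assms(1) sum_nonneg_eq_0_iff[of "V - {v0}" y] by auto
  with v0(1) y_v0 show thesis by (rule that)
qed

lemma sum_mult_single_support:
  fixes y :: "'v \<Rightarrow> real"
  assumes "finite V" "v0 \<in> V" "y v0 = 1" "\<forall>v\<in>V - {v0}. y v = 0"
  shows "(\<Sum>v\<in>V. g v * y v) = g v0"
  using assms by (simp add: sum.remove)

lemma selection_ok_selects:
  assumes "finite V" "selection_ok A V \<beta> y" "a \<in> A"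
  obtains v0 where "v0 \<in> V" "y a v0 = 1" "(\<Sum>v\<in>V. g v * y a v) = g v0"
proof -
  have "\<forall>v\<in>V. y a v \<in> {0, 1}" "(\<Sum>v\<in>V. y a v) = 1"
    using assms(2,3) unfolding selection_ok_def by auto
  then obtain v0 where "v0 \<in> V" "y a v0 = 1" "\<forall>v\<in>V - {v0}. y a v = 0"
    using zero_one_sum_eq_1_obtain[OF assms(1)] by blast
  then show thesis using that sum_mult_single_support[OF assms(1)] by blast
qed

lemma Omega_separable_minimization:
  fixes P :: "'ag \<Rightarrow> (nat \<Rightarrow> real^'p) \<Rightarrow> real"
    and piv :: "'ag \<Rightarrow> real^'k::finite \<Rightarrow> nat \<Rightarrow> real^'p"
  assumes "finite V"
    and piv_min: "\<forall>a\<in>A. \<forall>v\<in>V. piv a v \<in> S v \<and> (\<forall>p\<in>S v. P a (piv a v) \<le> P a p)"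
    and y_ok: "selection_ok A V \<beta> y"
    and y_min: "\<forall>y'. selection_ok A V \<beta> y' \<longrightarrow>
      (\<Sum>a\<in>A. \<Sum>v\<in>V. P a (piv a v) * y a v) \<le> (\<Sum>a\<in>A. \<Sum>v\<in>V. P a (piv a v) * y' a v)"
    and out: "\<forall>a\<in>A. \<forall>v\<in>V. y a v = 1 \<longrightarrow> out a = piv a v"
  shows "out \<in> Omega A V S \<beta>"
    and "fut \<in> Omega A V S \<beta> \<Longrightarrow> (\<Sum>a\<in>A. P a (out a)) \<le> (\<Sum>a\<in>A. P a (fut a))"
proof -
  show "out \<in> Omega A V S \<beta>"
    unfolding Omega_def using y_ok out piv_min by fastforce
  have out_cost: "(\<Sum>v\<in>V. P a (piv a v) * y a v) = P a (out a)" if "a \<in> A" for a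
    using out that by (metis selection_ok_selects[OF \<open>finite V\<close> y_ok])
  assume "fut \<in> Omega A V S \<beta>"
  then obtain y' where y'_ok: "selection_ok A V \<beta> y'"
    and fut: "\<forall>a\<in>A. \<forall>v\<in>V. y' a v = 1 \<longrightarrow> fut a \<in> S v"
    unfolding Omega_def by blast
  have fut_cost: "(\<Sum>v\<in>V. P a (piv a v) * y' a v) \<le> P a (fut a)" if "a \<in> A" for a
    using fut piv_min that by (metis selection_ok_selects[OF \<open>finite V\<close> y'_ok])
  have "(\<Sum>a\<in>A. P a (out a)) = (\<Sum>a\<in>A. \<Sum>v\<in>V. P a (piv a v) * y a v)"
    using out_cost by simp
  also have "\<dots> \<le> (\<Sum>a\<in>A. \<Sum>v\<in>V. P a (piv a v) * y' a v)"
    using y_min y'_ok by blast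
  also have "\<dots> \<le> (\<Sum>a\<in>A. P a (fut a))"
    using fut_cost by (rule sum_mono)
  finally show "(\<Sum>a\<in>A. P a (out a)) \<le> (\<Sum>a\<in>A. P a (fut a))" .
qed

theorem corollary5:
  fixes Ms :: "'ag \<Rightarrow> ('x::finite, 'u::finite, 't::finite, 'p::finite) agent_model"
    and A :: "'ag set"
    and V :: "(real^'k::finite) set"
    and S :: "real^'k \<Rightarrow> (nat \<Rightarrow> real^'p) set"
    and \<beta> :: "real^'k"
    and T n :: nat
    and x0 :: "'ag \<Rightarrow> real^'x" and th0 :: "'ag \<Rightarrow> real^'t"
    and past :: "'ag \<Rightarrow> nat \<Rightarrow> real^'p"
    and out :: "'ag \<Rightarrow> nat \<Rightarrow> real^'p"
  assumes fin_A: "finite A"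
    and agents: "\<forall>a\<in>A. A1 (Ms a) \<and> A2 (Ms a) \<and> A3 (Ms a) \<and> A8 n (Ms a)"
    and fin_V: "finite V"
    and S_sub: "\<forall>v\<in>V. \<forall>a\<in>A. \<forall>p\<in>S v. (\<forall>i<n. p i \<in> Piset (Ms a)) \<and> (\<forall>i\<ge>n. p i = 0)"
    and S_compact: "\<forall>v\<in>V. compact (S v)"
    and S_milp: "\<forall>v\<in>V. milp_block n (S v)"
    and init: "\<forall>a\<in>A. x0 a \<in> Xset (Ms a) \<and> th0 a \<in> Thset (Ms a)"
    and past_in: "\<forall>a\<in>A. \<forall>t\<le>T. past a t \<in> Piset (Ms a)"
    and alg: "ABMA_known_output Ms A V S \<beta> T n x0 th0 past out"
  shows "out \<in> Omega A V S \<beta> \<and>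
         (\<forall>fut\<in>Omega A V S \<beta>. Phi Ms A T n x0 th0 past out \<le> Phi Ms A T n x0 th0 past fut)"
proof -
  define P where "P a p = phi (Ms a) T n (x0 a) (th0 a) (combine T (past a) p)" for a p
  obtain piv y where
    "\<forall>a\<in>A. \<forall>v\<in>V. piv a v \<in> S v \<and> (\<forall>p\<in>S v. P a (piv a v) \<le> P a p)"
    "selection_ok A V \<beta> y"
    "\<forall>y'. selection_ok A V \<beta> y' \<longrightarrow>
       (\<Sum>a\<in>A. \<Sum>v\<in>V. P a (piv a v) * y a v) \<le> (\<Sum>a\<in>A. \<Sum>v\<in>V. P a (piv a v) * y' a v)"
    "\<forall>a\<in>A. \<forall>v\<in>V. y a v = 1 \<longrightarrow> out a = piv a v"
    using alg unfolding ABMA_known_output_def P_def by blast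
  note decomposition = Omega_separable_minimization[OF fin_V this]
  have "Phi Ms A T n x0 th0 past q = (\<Sum>a\<in>A. P a (q a))" for q
    unfolding Phi_def P_def ..
  with decomposition show ?thesis by auto
qed

end
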